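(* Let $\Gamma$ be a graph, possibly with some 2-fold edges. Then $\Gamma$ is the family diagram of at most one family of spherical simplices whose dihedral angles lie in $\{\frac{\pi}{2},\frac{\pi}{3},\frac{2\pi}{3},\frac{\pi}{4},\frac{3\pi}{4}\}$ (families considered up to isometry).
   Context: A spherical simplex in $S^n\subset\mathbb{R}^{n+1}$ is given by unit outer normals $f_1,\dots,f_{n+1}$ to its facets; the hyperplanes $f_i^\perp$ cut $S^n$ into $2^{n+1}$ simplices encoded by $\pm f_1,\dots,\pm f_{n+1}$, called a family. For a simplex whose dihedral angles are of the form $\pi/k$ or $\pi(k-1)/k$, its family diagram is the graph with vertices $v_i$ corresponding to the $f_i$, where $v_i$ and $v_j$ are joined by a $(k-2)$-fold edge if the angle between $f_i,f_j$ is $\pi/k$ or $\pi(k-1)/k$, and are not joined if $f_i\perp f_j$. All simplices of a family have the same family diagram. *)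

theory Defs
  imports "HOL-Analysis.Analysis"
begin

text \<open>A family of spherical simplices in S^n, a subset of R^(n+1), is encoded by n+1 unit
  outer normals f i, indexed by the finite type 'n with CARD('n) = n+1, living in
  real^'n (so the ambient space has dimension n+1).\<close>

definition simplex_normals :: "('n::finite \<Rightarrow> real^'n) \<Rightarrow> bool" where
  "simplex_normals f \<longleftrightarrow> (\<forall>i. norm (f i) = 1) \<and> inj f \<and> independent (range f)"

definition normal_angle :: "('n::finite \<Rightarrow> real^'n) \<Rightarrow> 'n \<Rightarrow> 'n \<Rightarrow> real" where
  "normal_angle f i j = arccos (f i \<bullet> f j)"

definition dihedral_angle :: "('n::finite \<Rightarrow> real^'n) \<Rightarrow> 'n \<Rightarrow> 'n \<Rightarrow> real" where
  "dihedral_angle f i j = pi - normal_angle f i j"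

text \<open>Family diagram: v_i, v_j joined by a (k-2)-fold edge if the angle between f i, f j
  is pi/k or pi(k-1)/k (k = 2 meaning no edge, i.e. orthogonality).\<close>
definition family_diagram :: "('n::finite \<Rightarrow> real^'n) \<Rightarrow> 'n \<Rightarrow> 'n \<Rightarrow> nat" where
  "family_diagram f i j =
     (THE m. \<exists>k::nat. k \<ge> 2 \<and> m = k - 2 \<and>
        (normal_angle f i j = pi / real k \<or> normal_angle f i j = pi * real (k - 1) / real k))"

text \<open>The family: the set of lines \<plusminus>f i (it determines all 2^(n+1) simplices).\<close>
definition family_vectors :: "('n::finite \<Rightarrow> real^'n) \<Rightarrow> (real^'n) set" where
  "family_vectors f = {v. \<exists>i. v = f i \<or> v = - f i}"

end

theory Submission
  imports Defs
begin

text \<open>The normals of a family are determined up to isometry by their Gram matrix, and for the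
  admissible angles the diagram determines every \<open>\<bar>f\<^sub>i \<bullet> f\<^sub>j\<bar> = cos (\<pi>/k)\<close>. So two
  families \<open>f\<close>, \<open>g\<close> with the same diagram have Gram matrices that differ only in the signs of
  off-diagonal entries, and marking each edge \<open>ij\<close> by whether the signs of \<open>f\<^sub>i \<bullet> f\<^sub>j\<close> and
  \<open>g\<^sub>i \<bullet> g\<^sub>j\<close> agree gives a signed graph. On a chordless cycle of length \<open>k\<close> the product of the
  signs of \<open>f\<^sub>i \<bullet> f\<^sub>i\<^sub>+\<^sub>1\<close> is forced to be \<open>(-1)\<^sup>k\<^sup>+\<^sup>1\<close>: otherwise the \<open>f\<^sub>i\<close> can be re-signed so
  that all neighbouring products are \<open>\<le> -1/2\<close>, and then \<open>\<Sum> \<plusminus>f\<^sub>i\<close> has squared norm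
  \<open>\<le> k - k = 0\<close>, contradicting independence. So every chordless cycle, hence every closed walk,
  of the signed graph is positive, and the graph is balanced: there are signs \<open>s\<^sub>i\<close> such that
  the vectors \<open>s\<^sub>i g\<^sub>i\<close> have the same Gram matrix as the \<open>f\<^sub>i\<close>. An orthogonal map sending
  \<open>f\<^sub>i\<close> to \<open>s\<^sub>i g\<^sub>i\<close> then maps the family of \<open>f\<close> onto that of \<open>g\<close>.\<close>

section \<open>Balanced signed graphs\<close>

definition walk :: "('a \<Rightarrow> 'a \<Rightarrow> bool) \<Rightarrow> 'a list \<Rightarrow> bool" where
  "walk adj p \<longleftrightarrow> p \<noteq> [] \<and> successively adj p"

definition closed_walk :: "('a \<Rightarrow> 'a \<Rightarrow> bool) \<Rightarrow> 'a list \<Rightarrow> bool" where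
  "closed_walk adj p \<longleftrightarrow> walk adj p \<and> hd p = last p"

(* A cycle x\<^sub>0, ..., x\<^sub>k\<^sub>-\<^sub>1 is the list xs of its vertices; as a closed walk it is xs @ [hd xs]. *)
definition chordless :: "('a \<Rightarrow> 'a \<Rightarrow> bool) \<Rightarrow> 'a list \<Rightarrow> bool" where
  "chordless adj xs \<longleftrightarrow> (\<forall>i<length xs. \<forall>j<length xs.
     adj (xs ! i) (xs ! j) \<longrightarrow> j = Suc i mod length xs \<or> i = Suc j mod length xs)"

fun path_weight :: "('a \<Rightarrow> 'a \<Rightarrow> 'b) \<Rightarrow> 'a list \<Rightarrow> 'b::comm_monoid_mult" where
  "path_weight e (x # y # zs) = e x y * path_weight e (y # zs)"
| "path_weight e _ = 1"

lemma successively_append_Cons_iff: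
  "successively P (xs @ y # ys) \<longleftrightarrow> successively P (xs @ [y]) \<and> successively P (y # ys)"
  by (induction xs rule: induct_list012) auto

lemma path_weight_append:
  "path_weight e (xs @ y # ys) = path_weight e (xs @ [y]) * path_weight e (y # ys)"
  by (induction e xs rule: path_weight.induct) (auto simp: mult.assoc)

lemma path_weight_append_nonempty:
  assumes "xs \<noteq> []" "ys \<noteq> []"
  shows "path_weight e (xs @ ys) = path_weight e xs * e (last xs) (hd ys) * path_weight e ys"
proof -
  obtain as x where xs: "xs = as @ [x]" using assms(1) by (cases xs rule: rev_cases) auto
  obtain y bs where ys: "ys = y # bs" using assms(2) by (cases ys) auto
  show ?thesis
    unfolding xs ys using path_weight_append[of e "as @ [x]" y bs] path_weight_append[of e as x "[y]"]
    by simp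
qed

lemma path_weight_rev:
  assumes "\<And>x y. e x y = e y x"
  shows "path_weight e (rev xs) = path_weight e xs"
proof (induction xs rule: induct_list012)
  case (3 x y zs)
  have "path_weight e (rev (x # y # zs)) = path_weight e (rev (y # zs)) * e y x"
    using path_weight_append_nonempty[of "rev (y # zs)" "[x]" e] by simp
  also have "\<dots> = e x y * path_weight e (y # zs)"
    using 3 assms[of x y] by (simp add: mult.commute)
  finally show ?case by simp
qed auto

lemma path_weight_split_loop:
  "path_weight e (as @ y # bs @ y # cs) = path_weight e (as @ y # cs) * path_weight e (y # bs @ [y])"
  using path_weight_append[of e as y "bs @ y # cs"] path_weight_append[of e "y # bs" y cs]
    path_weight_append[of e as y cs]
  by (simp add: ac_simps)

lemma path_weight_split_chord:
  assumes "e u w * e w u = 1"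
  shows "path_weight e (as @ u # bs @ w # cs) =
    path_weight e (u # bs @ [w, u]) * path_weight e (as @ u # w # cs)"
proof -
  have "path_weight e (u # bs @ [w, u]) = path_weight e (u # bs @ [w]) * e w u"
    using path_weight_append[of e "u # bs" w "[u]"] by simp
  moreover have "path_weight e (as @ u # w # cs) = path_weight e (as @ [u]) * e u w * path_weight e (w # cs)"
    using path_weight_append[of e as u "w # cs"] by (simp add: mult.assoc)
  moreover have "path_weight e (as @ u # bs @ w # cs) =
      path_weight e (as @ [u]) * path_weight e (u # bs @ [w]) * path_weight e (w # cs)"
    using path_weight_append[of e as u "bs @ w # cs"] path_weight_append[of e "u # bs" w cs]
    by (simp add: mult.assoc)
  ultimately have "path_weight e (u # bs @ [w, u]) * path_weight e (as @ u # w # cs) =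
      (e u w * e w u) * path_weight e (as @ u # bs @ w # cs)"
    by (simp add: ac_simps)
  with assms show ?thesis by simp
qed

lemma closed_walk_split_at_repeat:
  assumes "closed_walk adj p" "\<not> distinct (butlast p)"
  obtains q r where "closed_walk adj q" "closed_walk adj r" "length q < length p" "length r < length p"
    "path_weight e p = path_weight e r * path_weight e q"
proof -
  obtain as y bs cs where bp: "butlast p = as @ y # bs @ y # cs"
    using not_distinct_decomp[OF assms(2)] by auto
  define z where "z = last p"
  have p: "p = as @ y # bs @ y # cs @ [z]"
    using assms(1) bp append_butlast_last_id[of p] unfolding closed_walk_def walk_def z_def by fastforce
  show ?thesis
  proof
    have "successively adj (as @ [y])" "successively adj (y # bs @ [y])" "successively adj (y # cs @ [z])"
      using assms(1) successively_append_Cons_iff[of adj as y "bs @ y # cs @ [z]"]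
        successively_append_Cons_iff[of adj "y # bs" y "cs @ [z]"]
      unfolding p closed_walk_def walk_def by auto
    then show "closed_walk adj (y # bs @ [y])" "closed_walk adj (as @ y # cs @ [z])"
      using assms(1) successively_append_Cons_iff[of adj as y "cs @ [z]"]
      unfolding p closed_walk_def walk_def by (auto simp: hd_append)
    show "path_weight e p = path_weight e (as @ y # cs @ [z]) * path_weight e (y # bs @ [y])"
      unfolding p by (rule path_weight_split_loop)
  qed (simp_all add: p)
qed

lemma closed_walk_split_at_chord:
  assumes "closed_walk adj p" "symp adj" "butlast p = as @ u # bs @ w # cs" "adj u w"
    "bs \<noteq> []" "as \<noteq> [] \<or> cs \<noteq> []" "e u w * e w u = 1"
  obtains q r where "closed_walk adj q" "closed_walk adj r" "length q < length p" "length r < length p"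
    "path_weight e p = path_weight e q * path_weight e r"
proof -
  define z where "z = last p"
  have p: "p = as @ u # bs @ w # cs @ [z]"
    using assms(1,3) append_butlast_last_id[of p] unfolding closed_walk_def walk_def z_def by fastforce
  show ?thesis
  proof
    have "successively adj (as @ [u])" "successively adj (u # bs @ [w])" "successively adj (w # cs @ [z])"
      using assms(1) successively_append_Cons_iff[of adj as u "bs @ w # cs @ [z]"]
        successively_append_Cons_iff[of adj "u # bs" w "cs @ [z]"]
      unfolding p closed_walk_def walk_def by auto
    then show "closed_walk adj (u # bs @ [w, u])" "closed_walk adj (as @ u # w # cs @ [z])"
      using assms(1,2,4) successively_append_Cons_iff[of adj "u # bs" w "[u]"]
        successively_append_Cons_iff[of adj as u "w # cs @ [z]"]
      unfolding p closed_walk_def walk_def by (auto simp: hd_append symp_def)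
    show "path_weight e p = path_weight e (u # bs @ [w, u]) * path_weight e (as @ u # w # cs @ [z])"
      unfolding p using assms(7) by (rule path_weight_split_chord)
  qed (use assms(5,6) in \<open>auto simp: p\<close>)
qed

lemma take_nth_drop_decomp:
  assumes "i < j" "j < length xs"
  shows "xs = take i xs @ xs ! i # take (j - Suc i) (drop (Suc i) xs) @ xs ! j # drop (Suc j) xs"
proof -
  have "drop (j - Suc i) (drop (Suc i) xs) = xs ! j # drop (Suc j) xs"
    using assms by (simp add: Cons_nth_drop_Suc)
  then have "drop (Suc i) xs = take (j - Suc i) (drop (Suc i) xs) @ xs ! j # drop (Suc j) xs"
    by (metis append_take_drop_id)
  then show ?thesis
    using assms by (metis Cons_nth_drop_Suc append_take_drop_id order.strict_trans)
qed

lemma not_chordless_obtains_chord: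
  assumes "\<not> chordless adj xs" "symp adj" "\<And>x. \<not> adj x x"
  obtains as u bs w cs where "xs = as @ u # bs @ w # cs" "adj u w" "bs \<noteq> []" "as \<noteq> [] \<or> cs \<noteq> []"
proof -
  let ?k = "length xs"
  have chord: "\<exists>as u bs w cs. xs = as @ u # bs @ w # cs \<and> adj u w \<and> bs \<noteq> [] \<and> (as \<noteq> [] \<or> cs \<noteq> [])"
    if "i < j" "j < ?k" "adj (xs ! i) (xs ! j)" "j \<noteq> Suc i mod ?k" "i \<noteq> Suc j mod ?k" for i j
  proof (intro exI conjI)
    show "xs = take i xs @ xs ! i # take (j - Suc i) (drop (Suc i) xs) @ xs ! j # drop (Suc j) xs"
      using that(1,2) by (rule take_nth_drop_decomp)
    show "take (j - Suc i) (drop (Suc i) xs) \<noteq> []"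
      using that by auto
    show "take i xs \<noteq> [] \<or> drop (Suc j) xs \<noteq> []"
      using that by (cases "Suc j = ?k") auto
  qed (use that in simp)
  obtain i j where ij: "i < ?k" "j < ?k" "adj (xs ! i) (xs ! j)" "j \<noteq> Suc i mod ?k" "i \<noteq> Suc j mod ?k"
    using assms(1) unfolding chordless_def by blast
  have "adj (xs ! j) (xs ! i)"
    using ij(3) assms(2) by (rule sympD[rotated])
  moreover have "i \<noteq> j"
    using ij(3) assms(3) by auto
  ultimately show ?thesis
    using chord[of i j] chord[of j i] ij that by (metis linorder_neqE_nat)
qed

lemma closed_walk_short_weight:
  assumes "closed_walk adj p" "\<And>x. \<not> adj x x" "\<And>x y. adj x y \<Longrightarrow> e x y * e y x = 1"
    and "length (butlast p) < 3"
  shows "path_weight e p = 1"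
proof -
  obtain xs z where p: "p = xs @ [z]" "hd p = z" "successively adj p"
    using assms(1) unfolding closed_walk_def walk_def by (metis rev_exhaust last_snoc)
  have "length xs < 3" using assms(4) p(1) by simp
  then consider "xs = []" | a where "xs = [a]" | a b where "xs = [a, b]"
    by (auto simp: numeral_3_eq_3 less_Suc_eq length_Suc_conv)
  then show ?thesis
    using p assms(2,3) by cases auto
qed

lemma closed_walk_as_cycle:
  assumes "closed_walk adj p" "butlast p \<noteq> []"
  shows "p = butlast p @ [hd (butlast p)]"
  using assms unfolding closed_walk_def walk_def by (metis append_butlast_last_id hd_append2)

lemma closed_walk_weight_eq_1:
  fixes e :: "'a \<Rightarrow> 'a \<Rightarrow> 'b::comm_monoid_mult"
  assumes sym: "symp adj" and irrefl: "\<And>x. \<not> adj x x"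
    and inverse: "\<And>x y. adj x y \<Longrightarrow> e x y * e y x = 1"
    and cycles: "\<And>xs. distinct xs \<Longrightarrow> 3 \<le> length xs \<Longrightarrow> closed_walk adj (xs @ [hd xs]) \<Longrightarrow>
      chordless adj xs \<Longrightarrow> path_weight e (xs @ [hd xs]) = 1"
  shows "closed_walk adj p \<Longrightarrow> path_weight e p = 1"
proof (induction "length p" arbitrary: p rule: less_induct)
  case less
  (* Unless p is a chordless cycle, it splits at a repeated vertex or at a chord into two
     shorter closed walks whose weights multiply to that of p. *)
  consider "\<not> distinct (butlast p)"
    | "distinct (butlast p)" "\<not> chordless adj (butlast p)"
    | "distinct (butlast p)" "chordless adj (butlast p)" "length (butlast p) < 3"
    | "distinct (butlast p)" "chordless adj (butlast p)" "3 \<le> length (butlast p)"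
    by linarith
  then show ?case
  proof cases
    case 1
    then show ?thesis
      by (rule closed_walk_split_at_repeat[OF less.prems, where e = e]) (simp add: less.hyps)
  next
    case 2
    then obtain as u bs w cs where chord: "butlast p = as @ u # bs @ w # cs" "adj u w" "bs \<noteq> []"
      "as \<noteq> [] \<or> cs \<noteq> []"
      using not_chordless_obtains_chord sym irrefl by metis
    show ?thesis
      by (rule closed_walk_split_at_chord[OF less.prems sym chord inverse[OF chord(2)]])
        (simp add: less.hyps)
  next
    case 3
    show ?thesis
      using closed_walk_short_weight[OF less.prems irrefl, where e = e] inverse 3(3) by blast
  next
    case 4
    then have "butlast p \<noteq> []" by (metis list.size(3) not_numeral_le_zero)
    with less.prems obtain xs where p: "p = xs @ [hd xs]" "butlast p = xs"
      using closed_walk_as_cycle by blast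
    show ?thesis
      using 4 less.prems unfolding p by (intro cycles) simp_all
  qed
qed

lemma walk_rev_iff:
  assumes "symp adj"
  shows "walk adj (rev p) \<longleftrightarrow> walk adj p"
proof -
  have "successively (\<lambda>x y. adj y x) p \<longleftrightarrow> successively adj p"
    using assms by (intro successively_cong) (auto dest: sympD)
  then show ?thesis by (simp add: walk_def)
qed

lemma rtranclp_imp_walk:
  assumes "adj\<^sup>*\<^sup>* x y"
  obtains p where "walk adj p" "hd p = x" "last p = y"
proof -
  have "\<exists>p. walk adj p \<and> hd p = x \<and> last p = y"
    using assms
  proof (induction rule: rtranclp_induct)
    case base
    show ?case by (intro exI[of _ "[x]"]) (simp add: walk_def)
  next
    case (step y z)
    then obtain p where "walk adj p" "hd p = x" "last p = y" by blast
    with step.hyps(2) show ?case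
      by (intro exI[of _ "p @ [z]"]) (auto simp: walk_def successively_append_iff)
  qed
  then show ?thesis using that by blast
qed

lemma closed_walk_append_rev:
  assumes "symp adj" "walk adj p" "walk adj q" "hd p = hd q" "adj (last p) (last q)"
  shows "closed_walk adj (p @ rev q)"
  using assms walk_rev_iff[OF assms(1), of q]
  by (auto simp: closed_walk_def walk_def successively_append_iff hd_rev last_rev)

lemma path_weight_append_rev:
  assumes "p \<noteq> []" "q \<noteq> []" "\<And>x y. e x y = e y x"
  shows "path_weight e (p @ rev q) = path_weight e p * e (last p) (last q) * path_weight e q"
  using assms by (simp add: path_weight_append_nonempty hd_rev path_weight_rev)

lemma path_weight_sign:
  fixes e :: "'a \<Rightarrow> 'a \<Rightarrow> real"
  assumes "successively adj p" "\<And>x y. adj x y \<Longrightarrow> e x y \<in> {-1, 1}"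
  shows "path_weight e p \<in> {-1, 1}"
  using assms(1) by (induction p rule: induct_list012) (auto dest: assms(2))

lemma balanced_imp_switching:
  fixes e :: "'a \<Rightarrow> 'a \<Rightarrow> real"
  assumes sym: "symp adj" and esym: "\<And>x y. e x y = e y x" and sign: "\<And>x y. adj x y \<Longrightarrow> e x y \<in> {-1, 1}"
    and balanced: "\<And>p. closed_walk adj p \<Longrightarrow> path_weight e p = 1"
  obtains s where "\<And>x. s x \<in> {-1, 1}" "\<And>x y. adj x y \<Longrightarrow> e x y = s x * s y"
proof -
  (* root picks one vertex in each connected component, so adjacent vertices share it. *)
  define root where "root x = (SOME r. adj\<^sup>*\<^sup>* r x)" for x
  define path where "path x = (SOME p. walk adj p \<and> hd p = root x \<and> last p = x)" for x
  define s where "s x = path_weight e (path x)" for x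
  have path: "walk adj (path x) \<and> hd (path x) = root x \<and> last (path x) = x" for x
  proof -
    have "adj\<^sup>*\<^sup>* (root x) x"
      unfolding root_def by (rule someI[of _ x]) simp
    then show ?thesis
      unfolding path_def by (rule rtranclp_imp_walk) (rule someI, blast)
  qed
  have s_sign: "s x \<in> {-1, 1}" for x
    unfolding s_def using path[of x] sign by (intro path_weight_sign[of adj]) (auto simp: walk_def)
  have "s x * e x y * s y = 1" if "adj x y" for x y
  proof -
    have "(\<lambda>r. adj\<^sup>*\<^sup>* r x) = (\<lambda>r. adj\<^sup>*\<^sup>* r y)"
      using that sym by (metis rtranclp.rtrancl_into_rtrancl sympD)
    then have "root x = root y" unfolding root_def by simp
    then have "closed_walk adj (path x @ rev (path y))"
      using path[of x] path[of y] that by (intro closed_walk_append_rev[OF sym]) auto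
    then have "path_weight e (path x @ rev (path y)) = 1" by (rule balanced)
    then show ?thesis
      using path[of x] path[of y] by (simp add: walk_def path_weight_append_rev esym s_def)
  qed
  moreover have "e x y = s x * s y" if "s x * e x y * s y = 1" for x y
    using that s_sign[of x] s_sign[of y] by (auto simp: algebra_simps)
  ultimately show ?thesis using that s_sign by blast
qed

lemma chordless_cycles_imp_switching:
  fixes e :: "'a \<Rightarrow> 'a \<Rightarrow> real"
  assumes "symp adj" "\<And>x. \<not> adj x x"
    and "\<And>x y. e x y = e y x" and sign: "\<And>x y. adj x y \<Longrightarrow> e x y \<in> {-1, 1}"
    and "\<And>xs. distinct xs \<Longrightarrow> 3 \<le> length xs \<Longrightarrow> closed_walk adj (xs @ [hd xs]) \<Longrightarrow>
      chordless adj xs \<Longrightarrow> path_weight e (xs @ [hd xs]) = 1"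
  obtains s where "\<And>x. s x \<in> {-1, 1}" "\<And>x y. adj x y \<Longrightarrow> e x y = s x * s y"
proof (rule balanced_imp_switching)
  have "e x y * e y x = 1" if "adj x y" for x y
    using sign[OF that] assms(3)[of x y] by auto
  then show "path_weight e p = 1" if "closed_walk adj p" for p
    using closed_walk_weight_eq_1[OF assms(1,2) _ assms(5) that] by blast
qed (use assms in auto)

lemma nth_append_hd_Suc:
  assumes "t < length xs"
  shows "(xs @ [hd xs]) ! Suc t = xs ! (Suc t mod length xs)"
proof -
  have "xs \<noteq> []" using assms by auto
  then show ?thesis
    using assms by (cases "Suc t = length xs") (auto simp: nth_append hd_conv_nth)
qed

lemma closed_walk_cycle_adj:
  "closed_walk adj (xs @ [hd xs]) \<Longrightarrow> t < length xs \<Longrightarrow> adj (xs ! t) (xs ! (Suc t mod length xs))"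
  unfolding closed_walk_def walk_def
  by (metis successively_nth nth_append_hd_Suc nth_append length_append_singleton Suc_mono)

lemma path_weight_conv_prod:
  "path_weight e p = (\<Prod>t<length p - 1. e (p ! t) (p ! Suc t))"
  by (induction p rule: induct_list012) (simp_all add: prod.lessThan_Suc_shift del: prod.lessThan_Suc)

lemma path_weight_cycle_conv_prod:
  "path_weight e (xs @ [hd xs]) = (\<Prod>t<length xs. e (xs ! t) (xs ! (Suc t mod length xs)))"
  unfolding path_weight_conv_prod
proof (intro prod.cong)
  fix t assume "t \<in> {..<length xs}"
  then have "(xs @ [hd xs]) ! t = xs ! t" "(xs @ [hd xs]) ! Suc t = xs ! (Suc t mod length xs)"
    by (simp_all add: nth_append_hd_Suc) (simp add: nth_append)
  then show "e ((xs @ [hd xs]) ! t) ((xs @ [hd xs]) ! Suc t) = e (xs ! t) (xs ! (Suc t mod length xs))"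
    by simp
qed simp


section \<open>Chordless cycles of vectors\<close>

lemma sum_cyclic_band:
  fixes M :: "nat \<Rightarrow> nat \<Rightarrow> 'a::comm_monoid_add"
  assumes "3 \<le> k"
    and band: "\<And>i j. i < k \<Longrightarrow> j < k \<Longrightarrow> j \<noteq> i \<Longrightarrow> j \<noteq> Suc i mod k \<Longrightarrow> i \<noteq> Suc j mod k \<Longrightarrow> M i j = 0"
  shows "(\<Sum>i<k. \<Sum>j<k. M i j) = (\<Sum>i<k. M i i) + (\<Sum>i<k. M i (Suc i mod k)) + (\<Sum>i<k. M (Suc i mod k) i)"
proof -
  define N where "N i = Suc i mod k" for i
  have N_lt: "N i < k" for i
    using assms(1) by (simp add: N_def)
  have N_ne: "N i \<noteq> i" "N (N i) \<noteq> i" if "i < k" for i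
    using that assms(1) by (auto simp: N_def mod_Suc)
  have split: "M i j = (if j = i then M i j else 0) + (if j = N i then M i j else 0) + (if i = N j then M i j else 0)"
    if "i < k" "j < k" for i j
    using band[OF that] N_ne[OF that(1)] N_ne[OF that(2)] unfolding N_def by auto
  have "(\<Sum>i<k. \<Sum>j<k. M i j) = (\<Sum>i<k. \<Sum>j<k. (if j = i then M i j else 0) + (if j = N i then M i j else 0)
      + (if i = N j then M i j else 0))"
    by (intro sum.cong refl) (use split in auto)
  also have "\<dots> = (\<Sum>i<k. M i i) + (\<Sum>i<k. M i (N i)) + (\<Sum>j<k. \<Sum>i<k. if i = N j then M i j else 0)"
    by (simp add: sum.distrib N_lt sum.swap[of _ "{..<k}" "{..<k}"])
  also have "\<dots> = (\<Sum>i<k. M i i) + (\<Sum>i<k. M i (N i)) + (\<Sum>j<k. M (N j) j)"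
    by (simp add: N_lt)
  finally show ?thesis unfolding N_def .
qed

lemma cycle_combination_eq_0:
  fixes v :: "nat \<Rightarrow> 'a::real_inner" and t :: "nat \<Rightarrow> real"
  assumes "3 \<le> k" and unit: "\<And>i. i < k \<Longrightarrow> v i \<bullet> v i = 1" and sign: "\<And>i. i < k \<Longrightarrow> \<bar>t i\<bar> = 1"
    and neighbours: "\<And>i. i < k \<Longrightarrow> t i * t (Suc i mod k) * (v i \<bullet> v (Suc i mod k)) \<le> -1/2"
    and orth: "\<And>i j. i < k \<Longrightarrow> j < k \<Longrightarrow> j \<noteq> i \<Longrightarrow> j \<noteq> Suc i mod k \<Longrightarrow> i \<noteq> Suc j mod k \<Longrightarrow> v i \<bullet> v j = 0"
  shows "(\<Sum>i<k. t i *\<^sub>R v i) = 0"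
proof -
  define z where "z = (\<Sum>i<k. t i *\<^sub>R v i)"
  define M where "M i j = t i * t j * (v i \<bullet> v j)" for i j
  have band: "M i j = 0" if "i < k" "j < k" "j \<noteq> i" "j \<noteq> Suc i mod k" "i \<noteq> Suc j mod k" for i j
    using orth[OF that] by (simp add: M_def)
  have M_swap: "(\<Sum>i<k. M (Suc i mod k) i) = (\<Sum>i<k. M i (Suc i mod k))"
    by (intro sum.cong refl) (simp add: M_def inner_commute)
  have "z \<bullet> z = (\<Sum>i<k. \<Sum>j<k. (t i *\<^sub>R v i) \<bullet> (t j *\<^sub>R v j))"
    unfolding z_def inner_sum_left by (simp only: inner_sum_right)
  also have "\<dots> = (\<Sum>i<k. \<Sum>j<k. M i j)"
    by (simp add: M_def mult.assoc mult.left_commute)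
  also have "\<dots> = (\<Sum>i<k. M i i) + (\<Sum>i<k. M i (Suc i mod k)) + (\<Sum>i<k. M (Suc i mod k) i)"
    by (rule sum_cyclic_band[OF assms(1) band])
  also have "\<dots> = (\<Sum>i<k. M i i) + 2 * (\<Sum>i<k. M i (Suc i mod k))"
    unfolding M_swap by simp
  also have "\<dots> \<le> (\<Sum>i<k. 1) + 2 * (\<Sum>i<k. -1/2)"
  proof -
    have "M i i = 1" if "i < k" for i
      using unit[OF that] sign[OF that] abs_mult_self_eq[of "t i"] by (simp add: M_def)
    moreover have "M i (Suc i mod k) \<le> -1/2" if "i < k" for i
      using neighbours[OF that] by (simp add: M_def)
    ultimately show ?thesis
      by (intro add_mono mult_left_mono sum_mono) auto
  qed
  finally have "z \<bullet> z \<le> 0" by simp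
  then show ?thesis
    unfolding z_def[symmetric] by (metis inner_ge_zero inner_eq_zero_iff order_antisym)
qed

lemma independent_image_coeff_eq_0:
  assumes "independent (v ` A)" "inj_on v A" "finite A" "(\<Sum>i\<in>A. c i *\<^sub>R v i) = 0" "i \<in> A"
  shows "c i = 0"
proof -
  let ?u = "\<lambda>w. c (the_inv_into A v w)"
  have "(\<Sum>w\<in>v ` A. ?u w *\<^sub>R w) = 0"
    using assms(2,4) by (simp add: sum.reindex the_inv_into_f_f)
  then have "?u (v i) = 0"
    using assms(3,5) by (intro independentD[OF assms(1)]) auto
  then show ?thesis
    using assms(2,5) by (simp add: the_inv_into_f_f)
qed

lemma cyclic_sign_flip:
  fixes a :: "nat \<Rightarrow> real"
  assumes "(\<Prod>i<k. sgn (a i)) = (-1) ^ k" "\<And>i. i < k \<Longrightarrow> a i \<noteq> 0"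
  obtains t where "\<And>i. i \<le> k \<Longrightarrow> \<bar>t i\<bar> = 1"
    "\<And>i. i < k \<Longrightarrow> t i * t (Suc i mod k) * a i = - \<bar>a i\<bar>"
proof
  (* Solves t (i + 1) = - t i * sgn (a i); the hypothesis says that this closes up, t k = t 0. *)
  define t where "t i = (-1) ^ i * (\<Prod>j<i. sgn (a j))" for i :: nat
  show abs_t: "\<bar>t i\<bar> = 1" if "i \<le> k" for i
    using that assms(2) unfolding t_def abs_mult abs_prod by (simp add: prod.neutral abs_sgn_eq)
  have "t k = t 0"
    using assms(1) by (simp add: t_def flip: power_add)
  then have t_next: "t (Suc i mod k) = - t i * sgn (a i)" if "i < k" for i
    using that by (cases "Suc i = k") (auto simp: t_def)
  show "t i * t (Suc i mod k) * a i = - \<bar>a i\<bar>" if "i < k" for i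
  proof -
    have "t i * t (Suc i mod k) * a i = - (t i * t i) * (a i * sgn (a i))"
      using t_next[OF that] by (simp add: algebra_simps)
    also have "\<dots> = - \<bar>a i\<bar>"
      using that abs_t[of i] abs_mult_self_eq[of "t i"] by (simp flip: abs_sgn)
    finally show ?thesis .
  qed
qed

lemma chordless_cycle_sign_prod:
  fixes v :: "nat \<Rightarrow> 'a::real_inner"
  assumes k: "3 \<le> k" and inj: "inj_on v {..<k}" and indep: "independent (v ` {..<k})"
    and unit: "\<And>i. i < k \<Longrightarrow> v i \<bullet> v i = 1"
    and neighbours: "\<And>i. i < k \<Longrightarrow> 1/2 \<le> \<bar>v i \<bullet> v (Suc i mod k)\<bar>"
    and orth: "\<And>i j. i < k \<Longrightarrow> j < k \<Longrightarrow> j \<noteq> i \<Longrightarrow> j \<noteq> Suc i mod k \<Longrightarrow> i \<noteq> Suc j mod k \<Longrightarrow> v i \<bullet> v j = 0"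
  shows "(\<Prod>i<k. sgn (v i \<bullet> v (Suc i mod k))) = (-1) ^ (k + 1)"
proof (rule ccontr)
  define a where "a i = v i \<bullet> v (Suc i mod k)" for i
  have a_nonzero: "a i \<noteq> 0" if "i < k" for i
    using neighbours[OF that] by (auto simp: a_def)
  assume "(\<Prod>i<k. sgn (v i \<bullet> v (Suc i mod k))) \<noteq> (-1) ^ (k + 1)"
  then have "(\<Prod>i<k. sgn (a i)) \<noteq> - ((-1) ^ k)"
    by (simp add: a_def)
  moreover have "\<bar>(\<Prod>i<k. sgn (a i))\<bar> = \<bar>(-1) ^ k\<bar>"
    using a_nonzero by (simp add: abs_prod prod.neutral abs_sgn_eq)
  ultimately have "(\<Prod>i<k. sgn (a i)) = (-1) ^ k"
    by (metis abs_eq_iff)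
  then obtain t where t: "\<And>i. i \<le> k \<Longrightarrow> \<bar>t i\<bar> = 1"
    "\<And>i. i < k \<Longrightarrow> t i * t (Suc i mod k) * a i = - \<bar>a i\<bar>"
    using cyclic_sign_flip a_nonzero by blast
  have "(\<Sum>i<k. t i *\<^sub>R v i) = 0"
  proof (rule cycle_combination_eq_0[OF k unit _ _ orth])
    show "\<bar>t i\<bar> = 1" if "i < k" for i
      using t(1) that by simp
    show "t i * t (Suc i mod k) * (v i \<bullet> v (Suc i mod k)) \<le> -1/2" if "i < k" for i
      using t(2)[OF that] neighbours[OF that] by (simp add: a_def)
  qed
  then have "t 0 = 0"
    using k by (intro independent_image_coeff_eq_0[OF indep inj]) auto
  with t(1)[of 0] show False by simp
qed

lemma chordless_cycle_inner_sign_prod: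
  fixes f :: "'n \<Rightarrow> 'a::real_inner"
  assumes inj: "inj f" and indep: "independent (range f)" and unit: "\<And>i. norm (f i) = 1"
    and adj: "\<And>i j. adj i j \<longleftrightarrow> i \<noteq> j \<and> f i \<bullet> f j \<noteq> 0"
    and gap: "\<And>i j. adj i j \<Longrightarrow> 1/2 \<le> \<bar>f i \<bullet> f j\<bar>"
    and cycle: "distinct xs" "3 \<le> length xs" "closed_walk adj (xs @ [hd xs])" "chordless adj xs"
  shows "(\<Prod>t<length xs. sgn (f (xs ! t) \<bullet> f (xs ! (Suc t mod length xs)))) = (-1) ^ (length xs + 1)"
proof (rule chordless_cycle_sign_prod[where v = "\<lambda>t. f (xs ! t)"])
  have "inj_on ((!) xs) {..<length xs}"
    using cycle(1) by (intro inj_on_nth) auto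
  from comp_inj_on[OF this inj_on_subset[OF inj]]
  show "inj_on (\<lambda>t. f (xs ! t)) {..<length xs}"
    by (simp add: o_def)
  show "independent ((\<lambda>t. f (xs ! t)) ` {..<length xs})"
    by (rule independent_mono[OF indep]) auto
  show "f (xs ! t) \<bullet> f (xs ! t) = 1" for t
    using unit by (simp add: norm_eq_1)
  show "1/2 \<le> \<bar>f (xs ! t) \<bullet> f (xs ! (Suc t mod length xs))\<bar>" if "t < length xs" for t
    using gap closed_walk_cycle_adj[OF cycle(3) that] by blast
  show "f (xs ! i) \<bullet> f (xs ! j) = 0"
    if "i < length xs" "j < length xs" "j \<noteq> i" "j \<noteq> Suc i mod length xs" "i \<noteq> Suc j mod length xs" for i j
  proof -
    have "\<not> adj (xs ! i) (xs ! j)"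
      using cycle(4) that unfolding chordless_def by blast
    moreover have "xs ! i \<noteq> xs ! j"
      using cycle(1) that by (simp add: nth_eq_iff_index_eq)
    ultimately show ?thesis
      using adj by blast
  qed
qed (fact cycle(2))

lemma sgn_mult_sgn_mult_eq:
  fixes x y :: real
  shows "\<bar>y\<bar> = \<bar>x\<bar> \<Longrightarrow> sgn x * sgn y * y = x"
  by (metis abs_sgn mult.assoc mult.commute sgn_mult_abs)

lemma inner_signs_switching:
  fixes f h :: "'n \<Rightarrow> 'a::real_inner"
  assumes f: "inj f" "independent (range f)" "\<And>i. norm (f i) = 1"
    and h: "inj h" "independent (range h)" "\<And>i. norm (h i) = 1"
    and abs_eq: "\<And>i j. i \<noteq> j \<Longrightarrow> \<bar>h i \<bullet> h j\<bar> = \<bar>f i \<bullet> f j\<bar>"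
    and gap: "\<And>i j. i \<noteq> j \<Longrightarrow> f i \<bullet> f j \<noteq> 0 \<Longrightarrow> 1/2 \<le> \<bar>f i \<bullet> f j\<bar>"
  obtains s where "\<And>i. s i \<in> {-1, 1}"
    "\<And>i j. i \<noteq> j \<Longrightarrow> f i \<bullet> f j \<noteq> 0 \<Longrightarrow> sgn (f i \<bullet> f j) * sgn (h i \<bullet> h j) = s i * s j"
proof -
  define adj where "adj i j \<longleftrightarrow> i \<noteq> j \<and> f i \<bullet> f j \<noteq> 0" for i j
  define e where "e i j = sgn (f i \<bullet> f j) * sgn (h i \<bullet> h j)" for i j
  have adj_h: "adj i j \<longleftrightarrow> i \<noteq> j \<and> h i \<bullet> h j \<noteq> 0" for i j
    using abs_eq[of i j] by (auto simp: adj_def)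
  have gap_h: "1/2 \<le> \<bar>h i \<bullet> h j\<bar>" if "adj i j" for i j
    using that gap abs_eq by (auto simp: adj_def)
  have cycles: "path_weight e (xs @ [hd xs]) = 1"
    if "distinct xs" "3 \<le> length xs" "closed_walk adj (xs @ [hd xs])" "chordless adj xs" for xs
  proof -
    have "path_weight e (xs @ [hd xs]) = (-1) ^ (length xs + 1) * (-1) ^ (length xs + 1)"
      unfolding path_weight_cycle_conv_prod e_def prod.distrib
      using chordless_cycle_inner_sign_prod[OF f adj_def _ that] gap
        chordless_cycle_inner_sign_prod[OF h adj_h gap_h that]
      by (simp add: adj_def)
    then show ?thesis
      by (simp flip: power_add)
  qed
  obtain s where s: "\<And>i. s i \<in> {-1, 1}" "\<And>i j. adj i j \<Longrightarrow> e i j = s i * s j"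
  proof (rule chordless_cycles_imp_switching[of adj e])
    show "symp adj"
      by (auto simp: symp_def adj_def inner_commute)
    show "e i j = e j i" for i j
      by (simp add: e_def inner_commute)
    show "e i j \<in> {-1, 1}" if "adj i j" for i j
      using that adj_h[of i j] by (auto simp: adj_def e_def sgn_if)
  qed (use cycles in \<open>auto simp: adj_def\<close>)
  show ?thesis
  proof (rule that)
    show "s i \<in> {-1, 1}" for i
      by (rule s(1))
    show "sgn (f i \<bullet> f j) * sgn (h i \<bullet> h j) = s i * s j" if "i \<noteq> j" "f i \<bullet> f j \<noteq> 0" for i j
      using s(2)[of i j] that by (simp add: adj_def e_def)
  qed
qed

lemma gram_eq_up_to_signs:
  fixes f h :: "'n \<Rightarrow> 'a::real_inner"
  assumes f: "inj f" "independent (range f)" "\<And>i. norm (f i) = 1"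
    and h: "inj h" "independent (range h)" "\<And>i. norm (h i) = 1"
    and abs_eq: "\<And>i j. i \<noteq> j \<Longrightarrow> \<bar>h i \<bullet> h j\<bar> = \<bar>f i \<bullet> f j\<bar>"
    and gap: "\<And>i j. i \<noteq> j \<Longrightarrow> f i \<bullet> f j \<noteq> 0 \<Longrightarrow> 1/2 \<le> \<bar>f i \<bullet> f j\<bar>"
  obtains s where "\<And>i. s i \<in> {-1, 1}" "\<And>i j. (s i *\<^sub>R h i) \<bullet> (s j *\<^sub>R h j) = f i \<bullet> f j"
proof -
  obtain s where s: "\<And>i. s i \<in> {-1, 1}"
    "\<And>i j. i \<noteq> j \<Longrightarrow> f i \<bullet> f j \<noteq> 0 \<Longrightarrow> sgn (f i \<bullet> f j) * sgn (h i \<bullet> h j) = s i * s j"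
    using inner_signs_switching[OF f h abs_eq gap] by blast
  have "s i * s j * (h i \<bullet> h j) = f i \<bullet> f j" for i j
  proof -
    consider "i = j" | "i \<noteq> j" "f i \<bullet> f j = 0" | "i \<noteq> j" "f i \<bullet> f j \<noteq> 0"
      by blast
    then show ?thesis
    proof cases
      case 1
      then show ?thesis
        using s(1)[of i] f(3)[of i] h(3)[of i] by (auto simp: norm_eq_1)
    next
      case 2
      then show ?thesis
        using abs_eq[of i j] by simp
    next
      case 3
      then show ?thesis
        using s(2)[OF 3] abs_eq[OF 3(1)] sgn_mult_sgn_mult_eq[of "h i \<bullet> h j" "f i \<bullet> f j"] by simp
    qed
  qed
  note gram = this
  show ?thesis
  proof (rule that)
    show "s i \<in> {-1, 1}" for i
      by (rule s(1))
    show "(s i *\<^sub>R h i) \<bullet> (s j *\<^sub>R h j) = f i \<bullet> f j" for i j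
      using gram[of i j] by (simp add: ac_simps)
  qed
qed

lemma span_range_eq_UNIV:
  fixes f :: "'n::finite \<Rightarrow> real^'n"
  assumes "inj f" "independent (range f)"
  shows "span (range f) = UNIV"
proof -
  have "card (range f) = CARD('n)"
    using assms(1) by (simp add: card_image)
  then have "UNIV \<subseteq> span (range f)"
    by (intro card_ge_dim_independent assms(2)) auto
  then show ?thesis by auto
qed

lemma orthogonal_transformation_from_gram:
  fixes f h :: "'n::finite \<Rightarrow> real^'n"
  assumes inj: "inj f" and indep: "independent (range f)" and gram: "\<And>i j. h i \<bullet> h j = f i \<bullet> f j"
  obtains Q where "orthogonal_transformation Q" "\<And>i. Q (f i) = h i"
proof -
  obtain Q where lin: "linear Q" and Q: "\<forall>x\<in>range f. Q x = h (inv f x)"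
    using linear_independent_extend[OF indep, of "\<lambda>x. h (inv f x)"] by blast
  have Qf: "Q (f i) = h i" for i
    using Q inj by simp
  have inner_left: "linear (\<lambda>v. v \<bullet> w)" and inner_right: "linear (\<lambda>v. w \<bullet> v)" for w :: "real^'n"
    by (simp_all add: bounded_linear.linear bounded_linear_inner_left bounded_linear_inner_right)
  have bil_Q: "bilinear (\<lambda>v w. Q v \<bullet> Q w)"
    using linear_compose[OF lin inner_left] linear_compose[OF lin inner_right]
    by (simp add: bilinear_def o_def)
  have bil_inner: "bilinear (\<lambda>v w :: real^'n. v \<bullet> w)"
    using inner_left inner_right by (auto simp: bilinear_def)
  have span: "UNIV \<subseteq> span (range f)"
    using span_range_eq_UNIV[OF inj indep] by simp
  have "Q v \<bullet> Q w = v \<bullet> w" for v w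
    by (rule bilinear_eq[OF bil_Q bil_inner span span UNIV_I UNIV_I]) (auto simp: Qf gram)
  then have "orthogonal_transformation Q"
    using lin by (simp add: orthogonal_transformation_def)
  with Qf that show ?thesis by blast
qed


section \<open>Normals of a simplex family\<close>

lemma angle_order_unique:
  fixes k l :: nat
  assumes "2 \<le> k" "2 \<le> l"
    and "x = pi / k \<or> x = pi * real (k - 1) / k" "x = pi / l \<or> x = pi * real (l - 1) / l"
  shows "k = l"
proof -
  have ratio: "x / pi = 1 / n \<or> x / pi = 1 - 1 / n"
    if "2 \<le> n" "x = pi / n \<or> x = pi * real (n - 1) / n" for n :: nat
    using that by (auto simp: of_nat_diff field_simps)
  have "1 / real k \<le> 1/2" "1 / real l \<le> 1/2"
    using assms(1,2) by (simp_all add: field_simps)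
  then have "1 / real k = 1 / real l"
    using ratio[OF assms(1,3)] ratio[OF assms(2,4)] by (elim disjE) linarith+
  then show ?thesis by simp
qed

lemma family_diagram_eqI:
  assumes "2 \<le> k" "normal_angle f i j = pi / k \<or> normal_angle f i j = pi * real (k - 1) / k"
  shows "family_diagram f i j = k - 2"
  unfolding family_diagram_def
proof (rule the_equality)
  show "\<exists>l::nat. 2 \<le> l \<and> k - 2 = l - 2 \<and>
      (normal_angle f i j = pi / l \<or> normal_angle f i j = pi * real (l - 1) / l)"
    using assms by blast
  show "m = k - 2" if "\<exists>l::nat. 2 \<le> l \<and> m = l - 2 \<and>
      (normal_angle f i j = pi / l \<or> normal_angle f i j = pi * real (l - 1) / l)" for m
    using that angle_order_unique[OF assms(1) _ assms(2)] by blast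
qed

lemma abs_inner_eq_cos:
  assumes "norm (f i) = 1" "norm (f j) = 1" "2 \<le> k"
    and "normal_angle f i j = pi / k \<or> normal_angle f i j = pi * real (k - 1) / k"
  shows "\<bar>f i \<bullet> f j\<bar> = cos (pi / k)"
proof -
  have "\<bar>f i \<bullet> f j\<bar> \<le> 1"
    using Cauchy_Schwarz_ineq2[of "f i" "f j"] assms(1,2) by simp
  then have inner: "f i \<bullet> f j = cos (normal_angle f i j)"
    unfolding normal_angle_def by (simp add: cos_arccos_abs)
  have "pi * real (k - 1) / k = pi - pi / k"
    using assms(3) by (simp add: of_nat_diff field_simps)
  then have "\<bar>cos (normal_angle f i j)\<bar> = \<bar>cos (pi / k)\<bar>"
    using assms(4) by auto
  moreover have "0 \<le> cos (pi / k)"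
  proof (rule cos_ge_zero)
    show "pi / k \<le> pi / 2"
      using assms(3) by (intro frac_le) auto
    have "0 \<le> pi / k"
      by simp
    then show "- (pi / 2) \<le> pi / k"
      using pi_ge_zero by linarith
  qed
  ultimately show ?thesis
    using inner by simp
qed

lemma abs_inner_eq_cos_family_diagram:
  assumes "norm (f i) = 1" "norm (f j) = 1" "2 \<le> k"
    and "normal_angle f i j = pi / k \<or> normal_angle f i j = pi * real (k - 1) / k"
  shows "\<bar>f i \<bullet> f j\<bar> = cos (pi / (family_diagram f i j + 2))"
  using abs_inner_eq_cos[OF assms] family_diagram_eqI[OF assms(3,4)] assms(3) by simp

lemma normal_angle_cases:
  assumes "dihedral_angle f i j \<in> {pi/2, pi/3, 2*pi/3, pi/4, 3*pi/4}"
  obtains k :: nat where "k \<in> {2, 3, 4}"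
    "normal_angle f i j = pi / k \<or> normal_angle f i j = pi * real (k - 1) / k"
proof -
  have "normal_angle f i j \<in> {pi/2, pi/3, 2*pi/3, pi/4, 3*pi/4}"
    using assms unfolding dihedral_angle_def by (auto simp: field_simps)
  then show ?thesis
    using that[of 2] that[of 3] that[of 4] by auto
qed

lemma abs_inner_normals:
  assumes "norm (f i) = 1" "norm (f j) = 1" "dihedral_angle f i j \<in> {pi/2, pi/3, 2*pi/3, pi/4, 3*pi/4}"
  shows "\<bar>f i \<bullet> f j\<bar> = cos (pi / (family_diagram f i j + 2))"
    and "f i \<bullet> f j \<noteq> 0 \<Longrightarrow> 1/2 \<le> \<bar>f i \<bullet> f j\<bar>"
proof -
  obtain k :: nat where k: "k \<in> {2, 3, 4}"
    "normal_angle f i j = pi / k \<or> normal_angle f i j = pi * real (k - 1) / k"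
    using normal_angle_cases[OF assms(3)] by blast
  show "\<bar>f i \<bullet> f j\<bar> = cos (pi / (family_diagram f i j + 2))"
    using k by (intro abs_inner_eq_cos_family_diagram[OF assms(1,2)]) auto
  have "\<bar>f i \<bullet> f j\<bar> = cos (pi / k)"
    using k by (intro abs_inner_eq_cos[OF assms(1,2)]) auto
  moreover have "sqrt 2 / 2 \<ge> (1/2 :: real)"
    by simp
  ultimately show "1/2 \<le> \<bar>f i \<bullet> f j\<bar>" if "f i \<bullet> f j \<noteq> 0"
    using k(1) that by (auto simp: cos_45 cos_60)
qed

lemma family_vectors_eq_UN: "family_vectors f = (\<Union>i. {f i, - f i})"
  unfolding family_vectors_def by auto

lemma family_vectors_comp:
  assumes "surj p"
  shows "family_vectors (g \<circ> p) = family_vectors g"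
proof -
  have "family_vectors (g \<circ> p) = (\<Union>m\<in>range p. {g m, - g m})"
    unfolding family_vectors_eq_UN by auto
  then show ?thesis
    using assms by (simp add: family_vectors_eq_UN)
qed

lemma image_family_vectors:
  assumes "linear Q" "\<And>i. s i \<in> {-1, 1}" "\<And>i. Q (f i) = s i *\<^sub>R g i"
  shows "Q ` family_vectors f = family_vectors g"
proof -
  have "{Q (f i), Q (- f i)} = {g i, - g i}" for i
    using assms(2)[of i] assms(3)[of i] linear_neg[OF assms(1)] by auto
  then show ?thesis
    unfolding family_vectors_eq_UN image_UN by simp
qed

lemma simplex_normals_comp:
  assumes "simplex_normals g" "bij p"
  shows "simplex_normals (g \<circ> p)"
proof -
  have "range (g \<circ> p) = g ` range p"
    by (rule image_comp[symmetric])
  then have "range (g \<circ> p) = range g"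
    using bij_is_surj[OF assms(2)] by simp
  then show ?thesis
    using assms by (auto simp: simplex_normals_def intro: inj_compose bij_is_inj)
qed

lemma simplex_family_unique:
  fixes f g :: "'n::finite \<Rightarrow> real^'n"
  assumes "simplex_normals f" "simplex_normals g"
    and f_angles: "\<And>i j. i \<noteq> j \<Longrightarrow> dihedral_angle f i j \<in> {pi/2, pi/3, 2*pi/3, pi/4, 3*pi/4}"
    and g_angles: "\<And>i j. i \<noteq> j \<Longrightarrow> dihedral_angle g i j \<in> {pi/2, pi/3, 2*pi/3, pi/4, 3*pi/4}"
    and diagram: "\<And>i j. i \<noteq> j \<Longrightarrow> family_diagram g i j = family_diagram f i j"
  obtains Q where "orthogonal_transformation Q" "Q ` family_vectors f = family_vectors g"
proof -
  have f: "inj f" "independent (range f)" "\<And>i. norm (f i) = 1"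
    and g: "inj g" "independent (range g)" "\<And>i. norm (g i) = 1"
    using assms(1,2) by (auto simp: simplex_normals_def)
  have "\<bar>g i \<bullet> g j\<bar> = \<bar>f i \<bullet> f j\<bar>" if "i \<noteq> j" for i j
    using abs_inner_normals(1)[OF g(3) g(3) g_angles[OF that]] diagram[OF that]
      abs_inner_normals(1)[OF f(3) f(3) f_angles[OF that]] by simp
  then obtain s where s: "\<And>i. s i \<in> {-1, 1}" "\<And>i j. (s i *\<^sub>R g i) \<bullet> (s j *\<^sub>R g j) = f i \<bullet> f j"
    using gram_eq_up_to_signs[OF f g] abs_inner_normals(2)[OF f(3) f(3) f_angles] by metis
  obtain Q where Q: "orthogonal_transformation Q" "\<And>i. Q (f i) = s i *\<^sub>R g i"
    using orthogonal_transformation_from_gram[OF f(1,2) s(2)] by blast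
  then show ?thesis
    by (intro that[OF Q(1)] image_family_vectors[OF orthogonal_transformation_linear s(1)])
qed

theorem lemma2:
  fixes \<Gamma> :: "'v \<Rightarrow> 'v \<Rightarrow> nat"
    and f g :: "'n::finite \<Rightarrow> real^'n"
    and \<sigma> \<tau> :: "'n \<Rightarrow> 'v"
  assumes "simplex_normals f" and "simplex_normals g"
    and "\<And>i j. i \<noteq> j \<Longrightarrow>
           dihedral_angle f i j \<in> {pi/2, pi/3, 2*pi/3, pi/4, 3*pi/4}"
    and "\<And>i j. i \<noteq> j \<Longrightarrow>
           dihedral_angle g i j \<in> {pi/2, pi/3, 2*pi/3, pi/4, 3*pi/4}"
    and "bij \<sigma>" and "\<And>i j. i \<noteq> j \<Longrightarrow> family_diagram f i j = \<Gamma> (\<sigma> i) (\<sigma> j)"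
    and "bij \<tau>" and "\<And>i j. i \<noteq> j \<Longrightarrow> family_diagram g i j = \<Gamma> (\<tau> i) (\<tau> j)"
  shows "\<exists>Q. orthogonal_transformation Q \<and> Q ` family_vectors f = family_vectors g"
proof -
  define p where "p = inv \<tau> \<circ> \<sigma>"
  have p: "bij p" "\<And>i. \<tau> (p i) = \<sigma> i"
    using assms(5,7) by (auto simp: p_def bij_comp bij_imp_bij_inv bij_is_surj surj_f_inv_f)
  have p_neq: "p i \<noteq> p j" if "i \<noteq> j" for i j
    using that bij_is_inj[OF p(1)] by (auto dest: injD)
  have relabel: "dihedral_angle (g \<circ> p) i j = dihedral_angle g (p i) (p j)"
    "family_diagram (g \<circ> p) i j = family_diagram g (p i) (p j)" for i j
    by (simp_all add: dihedral_angle_def family_diagram_def normal_angle_def)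
  obtain Q where "orthogonal_transformation Q" "Q ` family_vectors f = family_vectors (g \<circ> p)"
  proof (rule simplex_family_unique[OF assms(1) simplex_normals_comp[OF assms(2) p(1)] assms(3)])
    show "dihedral_angle (g \<circ> p) i j \<in> {pi/2, pi/3, 2*pi/3, pi/4, 3*pi/4}" if "i \<noteq> j" for i j
      using assms(4)[OF p_neq[OF that]] by (simp add: relabel)
    show "family_diagram (g \<circ> p) i j = family_diagram f i j" if "i \<noteq> j" for i j
      using assms(6)[OF that] assms(8)[OF p_neq[OF that]] by (simp add: relabel p(2))
  qed
  then show ?thesis
    using family_vectors_comp[OF bij_is_surj[OF p(1)]] by auto
qed

end
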